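(* Let $T$ be a tree on $n \geq 3$ vertices. Then $T$ is saturated if and only if $T = K_{1,n-1}$.
   Context: All graphs are finite and simple. A degree monotone path in a graph $G$ is a path $v_1v_2\ldots v_m$ such that $\deg(v_1)\le \cdots\le \deg(v_m)$ or $\deg(v_1)\ge \cdots\ge \deg(v_m)$; its length is its number of vertices. $mp(G)$ denotes the maximum length of a degree monotone path in $G$. A graph $G$ is saturated if $mp(G+e)>mp(G)$ for every pair $e$ of non-adjacent vertices of $G$, where $G+e$ is $G$ with the edge $e$ added. *)

theory Defs
  imports Main
begin

definition simple_graph :: "'a set \<Rightarrow> 'a set set \<Rightarrow> bool" where
  "simple_graph V E \<longleftrightarrow> finite V \<and> (\<forall>e\<in>E. e \<subseteq> V \<and> card e = 2)"

definition deg :: "'a set \<Rightarrow> 'a set set \<Rightarrow> 'a \<Rightarrow> nat" where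
  "deg V E v = card {u \<in> V. {u, v} \<in> E}"

definition is_path :: "'a set \<Rightarrow> 'a set set \<Rightarrow> 'a list \<Rightarrow> bool" where
  "is_path V E p \<longleftrightarrow> p \<noteq> [] \<and> distinct p \<and> set p \<subseteq> V \<and>
     (\<forall>i. Suc i < length p \<longrightarrow> {p ! i, p ! Suc i} \<in> E)"

definition is_cycle :: "'a set \<Rightarrow> 'a set set \<Rightarrow> 'a list \<Rightarrow> bool" where
  "is_cycle V E c \<longleftrightarrow> is_path V E c \<and> length c \<ge> 3 \<and> {last c, hd c} \<in> E"

definition connected_graph :: "'a set \<Rightarrow> 'a set set \<Rightarrow> bool" where
  "connected_graph V E \<longleftrightarrow>
     (\<forall>u\<in>V. \<forall>v\<in>V. \<exists>p. is_path V E p \<and> hd p = u \<and> last p = v)"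

definition tree :: "'a set \<Rightarrow> 'a set set \<Rightarrow> bool" where
  "tree V E \<longleftrightarrow> simple_graph V E \<and> V \<noteq> {} \<and> connected_graph V E \<and> \<not> (\<exists>c. is_cycle V E c)"

text \<open>Degree monotone path; its length is its number of vertices.\<close>
definition deg_monotone_path :: "'a set \<Rightarrow> 'a set set \<Rightarrow> 'a list \<Rightarrow> bool" where
  "deg_monotone_path V E p \<longleftrightarrow> is_path V E p \<and>
     (sorted (map (deg V E) p) \<or> sorted (rev (map (deg V E) p)))"

definition mp :: "'a set \<Rightarrow> 'a set set \<Rightarrow> nat" where
  "mp V E = Max {length p | p. deg_monotone_path V E p}"

definition saturated :: "'a set \<Rightarrow> 'a set set \<Rightarrow> bool" where
  "saturated V E \<longleftrightarrow>
     (\<forall>u\<in>V. \<forall>v\<in>V. u \<noteq> v \<and> {u, v} \<notin> E \<longrightarrow> mp V (insert {u, v} E) > mp V E)"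

text \<open>G is the star K_{1,|V|-1}: some centre is adjacent to all other vertices and
there are no other edges.\<close>
definition is_star :: "'a set \<Rightarrow> 'a set set \<Rightarrow> bool" where
  "is_star V E \<longleftrightarrow> (\<exists>c\<in>V. E = {{c, v} | v. v \<in> V - {c}})"

end

theory Submission
  imports Defs
begin

(* A star has mp = 2 once n \<ge> 3, and joining two of its leaves creates the monotone path
   leaf, leaf, centre with degrees 2, 2, n - 1.
   Conversely, let x be a vertex of maximum degree of a tree T that is not a star.  The far end u
   of a longest path starting at x is a leaf not adjacent to x.  In T + ux the vertex x has
   strictly the largest degree, so a degree-nondecreasing path of T + ux visits x at most at its
   end; what precedes x is either already monotone in T or a path of T ending at the leaf u whose
   other vertices have degree at most 2.  Such a path cannot be a whole component of T (it misses
   x), so it starts at a vertex of degree 2, and prolonging it beyond that vertex yields a longer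
   nonincreasing path of T.  Hence mp(T + ux) \<le> mp(T) and T is not saturated. *)

lemma last_eq_nth: "Suc i = length xs \<Longrightarrow> last xs = xs ! i"
  by (metis diff_Suc_1 last_conv_nth list.size(3) nat.distinct(1))

lemma edge_endpoints:
  assumes "simple_graph V E" "{a, b} \<in> E"
  shows "a \<in> V" "b \<in> V" "a \<noteq> b"
  using assms unfolding simple_graph_def by (auto simp: card_insert_if split: if_splits)

lemma treeD:
  assumes "tree V E"
  shows "simple_graph V E" "connected_graph V E" "\<nexists>c. is_cycle V E c" "finite V" "V \<noteq> {}"
  using assms unfolding tree_def simple_graph_def by auto

lemma card_le_deg:
  assumes "finite V" "S \<subseteq> V" "\<And>s. s \<in> S \<Longrightarrow> {s, v} \<in> E"
  shows "card S \<le> deg V E v"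
  unfolding deg_def using assms by (intro card_mono) auto

lemma deg_le_card:
  assumes "finite S" "\<And>s. s \<in> V \<Longrightarrow> {s, v} \<in> E \<Longrightarrow> s \<in> S"
  shows "deg V E v \<le> card S"
  unfolding deg_def using assms by (intro card_mono) auto

lemma neighbour_mem_if_deg_le_card:
  assumes "finite V" "S \<subseteq> V" "\<And>s. s \<in> S \<Longrightarrow> {s, v} \<in> E" "deg V E v \<le> card S"
    and "z \<in> V" "{z, v} \<in> E"
  shows "z \<in> S"
proof -
  let ?N = "{u \<in> V. {u, v} \<in> E}"
  have "S \<subseteq> ?N" "finite ?N" using assms by auto
  moreover have "card ?N \<le> card S" using assms(4) unfolding deg_def .
  ultimately have "S = ?N" by (metis card_seteq)
  with assms show ?thesis by blast
qed

lemma two_neighbours_imp_deg_ge_2: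
  assumes "finite V" "a \<in> V" "{a, v} \<in> E" "b \<in> V" "{b, v} \<in> E" "a \<noteq> b"
  shows "2 \<le> deg V E v"
proof -
  have "card {a, b} \<le> deg V E v" using assms by (intro card_le_deg) auto
  with \<open>a \<noteq> b\<close> show ?thesis by simp
qed

lemma deg_ge_2_other_neighbour:
  assumes "2 \<le> deg V E v"
  obtains q where "q \<in> V" "{q, v} \<in> E" "q \<noteq> a"
  using deg_le_card[of "{a}" V v E] assms by fastforce

lemma deg_pos_neighbour:
  assumes "0 < deg V E v"
  obtains q where "q \<in> V" "{q, v} \<in> E"
  using deg_le_card[of "{}" V v E] assms by fastforce

lemma deg_insert_edge:
  assumes "finite V" "u \<in> V" "x \<in> V" "u \<noteq> x" "{u, x} \<notin> E"
  shows "deg V (insert {u, x} E) v = deg V E v + (if v = u \<or> v = x then 1 else 0)"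
proof -
  let ?N = "\<lambda>E. {z \<in> V. {z, v} \<in> E}"
  have "?N (insert {u, x} E) = (if v = u then insert x (?N E) else if v = x then insert u (?N E) else ?N E)"
    using assms by (auto simp: doubleton_eq_iff)
  moreover have "v = u \<Longrightarrow> x \<notin> ?N E" "v = x \<Longrightarrow> u \<notin> ?N E"
    using assms by (auto simp: insert_commute)
  ultimately show ?thesis
    using assms unfolding deg_def by auto
qed

lemma path_edge: "is_path V E p \<Longrightarrow> Suc i < length p \<Longrightarrow> {p ! i, p ! Suc i} \<in> E"
  unfolding is_path_def by blast

lemma path_nth_in: "is_path V E p \<Longrightarrow> i < length p \<Longrightarrow> p ! i \<in> V"
  unfolding is_path_def by (meson nth_mem subsetD)

lemma path_nth_eq_iff:
  "is_path V E p \<Longrightarrow> i < length p \<Longrightarrow> j < length p \<Longrightarrow> p ! i = p ! j \<longleftrightarrow> i = j"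
  unfolding is_path_def by (simp add: nth_eq_iff_index_eq)

lemma path_rev: "is_path V E p \<Longrightarrow> is_path V E (rev p)"
  unfolding is_path_def
proof (elim conjE, intro conjI allI impI)
  fix i assume edges: "\<forall>i. Suc i < length p \<longrightarrow> {p ! i, p ! Suc i} \<in> E"
    and i: "Suc i < length (rev p)"
  then have "{p ! (length p - Suc (Suc i)), p ! Suc (length p - Suc (Suc i))} \<in> E"
    by simp
  with i show "{rev p ! i, rev p ! Suc i} \<in> E"
    by (simp add: rev_nth Suc_diff_Suc insert_commute)
qed auto

lemma path_take: "is_path V E p \<Longrightarrow> 0 < k \<Longrightarrow> is_path V E (take k p)"
  unfolding is_path_def by (auto dest: in_set_takeD)

lemma path_drop: "is_path V E p \<Longrightarrow> k < length p \<Longrightarrow> is_path V E (drop k p)"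
  unfolding is_path_def by (auto dest: in_set_dropD)

lemma path_Cons:
  assumes p: "is_path V E p" and q: "q \<in> V" "q \<notin> set p" "{q, hd p} \<in> E"
  shows "is_path V E (q # p)"
  unfolding is_path_def
proof (intro conjI allI impI)
  fix i assume "Suc i < length (q # p)"
  then show "{(q # p) ! i, (q # p) ! Suc i} \<in> E"
    using p q path_edge[OF p] by (cases i) (auto simp: is_path_def hd_conv_nth)
qed (use p q in \<open>auto simp: is_path_def\<close>)

lemma path_snoc:
  assumes p: "is_path V E p" and y: "y \<in> V" "y \<notin> set p" "{last p, y} \<in> E"
  shows "is_path V E (p @ [y])"
  unfolding is_path_def
proof (intro conjI allI impI)
  fix i assume i: "Suc i < length (p @ [y])"
  show "{(p @ [y]) ! i, (p @ [y]) ! Suc i} \<in> E"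
  proof (cases "Suc i < length p")
    case True
    then show ?thesis using path_edge[OF p] by (simp add: nth_append)
  next
    case False
    with i have "i = length p - 1" "p \<noteq> []" by auto
    with y show ?thesis by (simp add: nth_append last_conv_nth)
  qed
qed (use p y in \<open>auto simp: is_path_def\<close>)

lemma path_remove_unused_edge:
  assumes "is_path V (insert e E) p" "\<And>i. Suc i < length p \<Longrightarrow> {p ! i, p ! Suc i} \<noteq> e"
  shows "is_path V E p"
  using assms unfolding is_path_def by blast

lemma path_remove_edge_at_unvisited:
  assumes "is_path V (insert {u, x} E) p" "x \<notin> set p"
  shows "is_path V E p"
proof (rule path_remove_unused_edge[OF assms(1)])
  fix i assume "Suc i < length p"
  then have "p ! i \<noteq> x" "p ! Suc i \<noteq> x" using assms(2) by (auto dest: nth_mem)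
  then show "{p ! i, p ! Suc i} \<noteq> {u, x}" by (auto simp: doubleton_eq_iff)
qed

lemma path_interior_deg_ge_2:
  assumes "simple_graph V E" "is_path V E p" "0 < i" "Suc i < length p"
  shows "2 \<le> deg V E (p ! i)"
proof -
  obtain j where j: "i = Suc j" using \<open>0 < i\<close> by (cases i) auto
  show ?thesis
  proof (rule two_neighbours_imp_deg_ge_2)
    show "finite V" using assms(1) unfolding simple_graph_def by simp
    show "p ! j \<in> V" "p ! Suc i \<in> V" using assms j by (auto intro: path_nth_in)
    show "{p ! j, p ! i} \<in> E" using path_edge[OF assms(2), of j] assms j by simp
    show "{p ! Suc i, p ! i} \<in> E"
      using path_edge[OF assms(2), of i] assms by (simp add: insert_commute)
    show "p ! j \<noteq> p ! Suc i" using path_nth_eq_iff[OF assms(2), of j "Suc i"] assms j by simp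
  qed
qed

lemma path_length_le_card:
  assumes "finite V" "is_path V E p"
  shows "length p \<le> card V"
proof -
  have "length p = card (set p)" using assms(2) unfolding is_path_def by (simp add: distinct_card)
  also have "\<dots> \<le> card V" using assms unfolding is_path_def by (simp add: card_mono)
  finally show ?thesis .
qed

lemma connected_neighbour_closed:
  assumes conn: "connected_graph V E" and v: "v \<in> V" "v \<in> S"
    and closed: "\<And>y z. y \<in> S \<Longrightarrow> z \<in> V \<Longrightarrow> {z, y} \<in> E \<Longrightarrow> z \<in> S"
  shows "V \<subseteq> S"
proof
  fix u assume "u \<in> V"
  with conn v obtain r where r: "is_path V E r" "hd r = v" "last r = u"
    unfolding connected_graph_def by blast
  have "r ! k \<in> S" if "k < length r" for k
    using that
  proof (induction k)
    case 0
    with r v show ?case by (simp add: hd_conv_nth)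
  next
    case (Suc k)
    have "{r ! Suc k, r ! k} \<in> E" using path_edge[OF r(1) Suc.prems] by (simp add: insert_commute)
    with Suc show ?case using closed path_nth_in[OF r(1)] by simp
  qed
  moreover have "last r \<in> set r" using r(1) unfolding is_path_def by simp
  ultimately show "u \<in> S" using r(3) by (metis in_set_conv_nth)
qed

lemma path_covers_connected_graph:
  assumes sg: "simple_graph V E" and conn: "connected_graph V E" and L: "is_path V E L"
    and len: "2 \<le> length L" and ends: "deg V E (hd L) \<le> 1" "deg V E (last L) \<le> 1"
    and interior: "\<And>i. 0 < i \<Longrightarrow> Suc i < length L \<Longrightarrow> deg V E (L ! i) \<le> 2"
  shows "V \<subseteq> set L"
proof (rule connected_neighbour_closed[OF conn])
  have fin: "finite V" using sg unfolding simple_graph_def by simp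
  have in_V: "\<And>i. i < length L \<Longrightarrow> L ! i \<in> V" using L by (rule path_nth_in)
  have adj: "\<And>i. Suc i < length L \<Longrightarrow> {L ! i, L ! Suc i} \<in> E"
    "\<And>i. Suc i < length L \<Longrightarrow> {L ! Suc i, L ! i} \<in> E"
    using path_edge[OF L] by (auto simp: insert_commute)
  show "hd L \<in> V" "hd L \<in> set L" using L unfolding is_path_def by auto
  fix y z assume "y \<in> set L" and z: "z \<in> V" "{z, y} \<in> E"
  then obtain i where i: "i < length L" "y = L ! i" by (auto simp: in_set_conv_nth)
  consider "i = 0" | "Suc i = length L" | "0 < i" "Suc i < length L" using i by linarith
  then show "z \<in> set L"
  proof cases
    case 1
    have "deg V E y \<le> card {L ! 1}" using ends(1) len 1 i by (simp add: hd_conv_nth)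
    with len have "z \<in> {L ! 1}"
      using adj(2)[of 0] in_V[of 1] 1 i by (intro neighbour_mem_if_deg_le_card[OF fin _ _ _ z]) auto
    with len show ?thesis by simp
  next
    case 2
    then obtain j where j: "i = Suc j" using len by (cases i) auto
    have "last L = y" using 2 i by (simp add: last_eq_nth)
    then have "deg V E y \<le> card {L ! j}" using ends(2) by simp
    with 2 j have "z \<in> {L ! j}"
      using adj(1)[of j] in_V[of j] i by (intro neighbour_mem_if_deg_le_card[OF fin _ _ _ z]) auto
    with 2 j show ?thesis by simp
  next
    case 3
    then obtain j where j: "i = Suc j" by (cases i) auto
    have "L ! j \<noteq> L ! Suc i" using path_nth_eq_iff[OF L, of j "Suc i"] 3 j by simp
    then have "deg V E y \<le> card {L ! j, L ! Suc i}" using interior[OF 3] i by simp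
    with 3 j have "z \<in> {L ! j, L ! Suc i}"
      using adj(1)[of j] adj(2)[of i] in_V[of j] in_V[of "Suc i"] i
      by (intro neighbour_mem_if_deg_le_card[OF fin _ _ _ z]) auto
    with 3 j show ?thesis by auto
  qed
qed

lemma finite_deg_monotone_path_lengths:
  "finite V \<Longrightarrow> finite {length p | p. deg_monotone_path V E p}"
proof (rule finite_subset)
  assume "finite V"
  then show "{length p | p. deg_monotone_path V E p} \<subseteq> {..card V}"
    unfolding deg_monotone_path_def using path_length_le_card by fastforce
qed simp

lemma length_le_mp: "finite V \<Longrightarrow> deg_monotone_path V E p \<Longrightarrow> length p \<le> mp V E"
  unfolding mp_def by (rule Max_ge) (use finite_deg_monotone_path_lengths in blast)+

lemma mp_attained:
  assumes "finite V" "V \<noteq> {}"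
  obtains p where "deg_monotone_path V E p" "length p = mp V E"
proof -
  from \<open>V \<noteq> {}\<close> obtain v where "v \<in> V" by blast
  then have "deg_monotone_path V E [v]" unfolding deg_monotone_path_def is_path_def by simp
  then have "mp V E \<in> {length p | p. deg_monotone_path V E p}"
    unfolding mp_def using assms by (intro Max_in finite_deg_monotone_path_lengths) auto
  with that show ?thesis by auto
qed

lemma deg_monotone_path_no_peak:
  assumes "deg_monotone_path V E p" "Suc (Suc i) < length p"
  shows "deg V E (p ! Suc i) \<le> max (deg V E (p ! i)) (deg V E (p ! Suc (Suc i)))"
  using assms sorted_nth_mono[of "map (deg V E) p" "Suc i" "Suc (Suc i)"]
    sorted_rev_nth_mono[of "map (deg V E) p" i "Suc i"]
  unfolding deg_monotone_path_def by auto

lemma longest_path_ends_in_leaf: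
  assumes sg: "simple_graph V E" and acyc: "\<nexists>c. is_cycle V E c"
    and p: "is_path V E p" "2 \<le> length p"
    and longest: "\<And>r. is_path V E r \<Longrightarrow> hd r = hd p \<Longrightarrow> length r \<le> length p"
  shows "deg V E (last p) = 1"
proof -
  have fin: "finite V" using sg unfolding simple_graph_def by simp
  define n where "n = length p"
  define w where "w = p ! (n - 2)"
  have last_p: "last p = p ! Suc (n - 2)" using p(2) by (simp add: n_def last_eq_nth)
  have w: "w \<in> V" "{w, last p} \<in> E"
    using path_nth_in[OF p(1)] path_edge[OF p(1), of "n - 2"] p(2) last_p by (auto simp: w_def n_def)
  have only_w: "y = w" if y: "y \<in> V" "{y, last p} \<in> E" for y
  proof (cases "y \<in> set p")
    case False
    then have "is_path V E (p @ [y])" using path_snoc[OF p(1) y(1)] y(2) by (simp add: insert_commute)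
    moreover have "hd (p @ [y]) = hd p" using p(2) by (cases p) auto
    ultimately show ?thesis using longest[of "p @ [y]"] by simp
  next
    case True
    then obtain j where j: "j < n" "p ! j = y" by (auto simp: in_set_conv_nth n_def)
    have "y \<noteq> last p" using edge_endpoints[OF sg y(2)] by simp
    then have "j \<noteq> Suc (n - 2)" using j last_p by auto
    moreover have "\<not> j + 2 < n"
    proof
      assume "j + 2 < n"
      then have "is_cycle V E (drop j p)"
        using path_drop[OF p(1), of j] j y(2) unfolding is_cycle_def by (auto simp: n_def hd_drop_conv_nth insert_commute)
      with acyc show False by blast
    qed
    ultimately have "j = n - 2" using j p(2) n_def by linarith
    with j show ?thesis by (simp add: w_def)
  qed
  have "deg V E (last p) \<le> card {w}" using only_w by (intro deg_le_card) auto
  moreover have "card {w} \<le> deg V E (last p)" using w fin by (intro card_le_deg) auto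
  ultimately show ?thesis by simp
qed

lemma is_star_if_short_paths:
  assumes sg: "simple_graph V E" and conn: "connected_graph V E" and x: "x \<in> V"
    and short: "\<And>r. is_path V E r \<Longrightarrow> hd r = x \<Longrightarrow> length r \<le> 2"
  shows "is_star V E"
proof -
  have adj: "{x, v} \<in> E" if v: "v \<in> V" "v \<noteq> x" for v
  proof -
    obtain r where r: "is_path V E r" "hd r = x" "last r = v"
      using conn x v unfolding connected_graph_def by blast
    then have "length r \<noteq> 0" "length r \<le> 2" using short unfolding is_path_def by auto
    moreover have "length r \<noteq> 1" using r v by (auto simp: length_Suc_conv)
    ultimately have "length r = 2" by linarith
    then have "r \<noteq> []" "last r = r ! 1" by (auto simp: last_eq_nth)
    then show ?thesis using path_edge[OF r(1), of 0] r \<open>length r = 2\<close> by (auto simp: hd_conv_nth)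
  qed
  have "E = {{x, v} |v. v \<in> V - {x}}"
  proof (intro equalityI subsetI)
    fix e assume e: "e \<in> E"
    then obtain a b where ab: "e = {a, b}" using sg unfolding simple_graph_def by (meson card_2_iff)
    then have a: "a \<in> V" "b \<in> V" "a \<noteq> b" using edge_endpoints[OF sg] e by auto
    have "x = a \<or> x = b"
    proof (rule ccontr)
      assume "\<not> (x = a \<or> x = b)"
      then have "is_path V E [x, a, b]"
        using path_Cons[of V E "[a, b]" x] path_Cons[of V E "[b]" a] adj[of a] a x e ab
        by (auto simp: is_path_def)
      with short[of "[x, a, b]"] show False by simp
    qed
    with ab a show "e \<in> {{x, v} |v. v \<in> V - {x}}" by (auto simp: insert_commute)
  qed (auto intro: adj)
  with x show ?thesis unfolding is_star_def by blast
qed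

lemma nonadjacent_leaf_if_not_star:
  assumes tree: "tree V E" and not_star: "\<not> is_star V E"
    and x: "x \<in> V" "\<forall>v\<in>V. deg V E v \<le> deg V E x"
  obtains u where "u \<in> V" "deg V E u = 1" "{u, x} \<notin> E" "2 \<le> deg V E x"
proof -
  note sg = treeD(1)[OF tree] and conn = treeD(2)[OF tree]
    and acyc = treeD(3)[OF tree] and fin = treeD(4)[OF tree]
  have "is_path V E [x] \<and> hd [x] = x" using x unfolding is_path_def by simp
  moreover have "\<forall>r. is_path V E r \<and> hd r = x \<longrightarrow> length r < Suc (card V)"
    using path_length_le_card[OF fin, of E] by (simp add: less_Suc_eq_le)
  ultimately obtain p where p: "is_path V E p" "hd p = x"
    and longest: "\<And>r. is_path V E r \<Longrightarrow> hd r = x \<Longrightarrow> length r \<le> length p"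
    using ex_has_greatest_nat[of "\<lambda>r. is_path V E r \<and> hd r = x" "[x]" length "Suc (card V)"]
    by blast
  have "3 \<le> length p"
  proof (rule ccontr)
    assume "\<not> 3 \<le> length p"
    then have "is_star V E" using is_star_if_short_paths[OF sg conn x(1)] longest by fastforce
    with not_star show False by simp
  qed
  show thesis
  proof
    show "last p \<in> V" using p(1) unfolding is_path_def by auto
    show "deg V E (last p) = 1"
      using longest_path_ends_in_leaf[OF sg acyc p(1)] longest \<open>3 \<le> length p\<close> p(2) by simp
    show "{last p, x} \<notin> E" using acyc p \<open>3 \<le> length p\<close> unfolding is_cycle_def by blast
    have "2 \<le> deg V E (p ! 1)" using path_interior_deg_ge_2[OF sg p(1), of 1] \<open>3 \<le> length p\<close> by simp
    with x path_nth_in[OF p(1), of 1] \<open>3 \<le> length p\<close> show "2 \<le> deg V E x" by fastforce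
  qed
qed

lemma neighbour_of_path_start_not_on_path:
  assumes sg: "simple_graph V E" and acyc: "\<nexists>c. is_cycle V E c" and L: "is_path V E L"
    and q: "{q, hd L} \<in> E" "q \<noteq> L ! 1"
  shows "q \<notin> set L"
proof
  assume "q \<in> set L"
  then obtain j where j: "j < length L" "L ! j = q" by (auto simp: in_set_conv_nth)
  have "q \<noteq> hd L" using edge_endpoints[OF sg q(1)] by simp
  moreover have "L ! 0 = hd L" using L unfolding is_path_def by (simp add: hd_conv_nth)
  ultimately have "j \<noteq> 0" using j(2) by metis
  moreover have "j \<noteq> 1" using j(2) q(2) by auto
  ultimately have "3 \<le> length (take (Suc j) L)" using j by simp
  moreover have "last (take (Suc j) L) = q" using j by (simp add: take_Suc_conv_app_nth)
  moreover have "hd (take (Suc j) L) = hd L" by simp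
  moreover have "is_path V E (take (Suc j) L)" using path_take[OF L] by simp
  ultimately have "is_cycle V E (take (Suc j) L)"
    unfolding is_cycle_def using q(1) by simp
  with acyc show False by blast
qed

lemma deg_monotone_edge_to_leaf:
  assumes sg: "simple_graph V E" and u: "deg V E u = 1"
  obtains w where "deg_monotone_path V E [w, u]"
proof -
  have fin: "finite V" using sg unfolding simple_graph_def by simp
  have "0 < deg V E u" using u by simp
  then obtain w where w: "w \<in> V" "{w, u} \<in> E" by (rule deg_pos_neighbour)
  then have "u \<in> V" "u \<noteq> w" using edge_endpoints[OF sg w(2)] by auto
  then have "is_path V E [w, u]" using path_Cons[of V E "[u]" w] w unfolding is_path_def by simp
  moreover have "1 \<le> deg V E w"
    using card_le_deg[of V "{u}" w E] fin w \<open>u \<in> V\<close> by (simp add: insert_commute)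
  ultimately have "deg_monotone_path V E [w, u]" using u unfolding deg_monotone_path_def by simp
  then show thesis by (rule that)
qed

lemma deg_monotone_path_beyond_leaf_path:
  assumes tree: "tree V E" and L: "is_path V E L" and leaf: "deg V E (last L) = 1"
    and sorted: "sorted (map (deg V E) (butlast L))"
    and le_2: "\<forall>v\<in>set (butlast L). deg V E v \<le> 2"
    and x: "x \<in> V" "x \<notin> set L" "2 \<le> deg V E x"
  obtains q where "deg_monotone_path V E q" "length L < length q"
proof (cases "butlast L")
  case Nil
  then have "L = [last L]" using L unfolding is_path_def by (metis append_butlast_last_id append_Nil)
  with deg_monotone_edge_to_leaf[OF treeD(1)[OF tree] leaf] that show thesis
    by (metis length_Cons lessI list.size(3))
next
  case (Cons b bs)
  note sg = treeD(1)[OF tree] and conn = treeD(2)[OF tree]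
  let ?d = "deg V E"
  have L_split: "L = butlast L @ [last L]" using L unfolding is_path_def by simp
  with Cons have L_eq: "L = b # bs @ [last L]" by simp
  have hd_L: "hd L = b" and len: "2 \<le> length L" by (subst L_eq, simp)+
  have interior_le_2: "?d (L ! i) \<le> 2" if "Suc i < length L" for i
  proof -
    have "butlast L ! i \<in> set (butlast L)" using that by (intro nth_mem) simp
    with le_2 that show ?thesis by (simp add: nth_butlast)
  qed
  have b_ge_2: "2 \<le> ?d b"
  proof (rule ccontr)
    assume "\<not> 2 \<le> ?d b"
    then have "V \<subseteq> set L"
      using path_covers_connected_graph[OF sg conn L len] hd_L leaf interior_le_2 by simp
    with x show False by blast
  qed
  have deg_2: "?d v = 2" if "v \<in> set (butlast L)" for v
  proof -
    have "?d b \<le> ?d v" using sorted that Cons by auto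
    moreover have "?d v \<le> 2" using le_2 that by blast
    ultimately show ?thesis using b_ge_2 by linarith
  qed
  obtain q where q: "q \<in> V" "{q, b} \<in> E" "q \<noteq> L ! 1"
    using b_ge_2 by (rule deg_ge_2_other_neighbour)
  then have "q \<notin> set L"
    using neighbour_of_path_start_not_on_path[OF sg treeD(3)[OF tree] L] hd_L by simp
  then have M: "is_path V E (q # L)" using path_Cons[OF L q(1)] q(2) hd_L by simp
  have q_ge_2: "2 \<le> ?d q"
  proof (rule ccontr)
    assume "\<not> 2 \<le> ?d q"
    moreover have "?d ((q # L) ! i) \<le> 2" if "0 < i" "Suc i < length (q # L)" for i
      using that interior_le_2[of "i - 1"] by (cases i) auto
    ultimately have "V \<subseteq> set (q # L)"
      using path_covers_connected_graph[OF sg conn M] len leaf by simp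
    with x \<open>\<not> 2 \<le> ?d q\<close> show False by auto
  qed
  have "map ?d (butlast L) = replicate (length (butlast L)) 2"
    using deg_2 by (intro replicate_eqI) auto
  then have "rev (map ?d (q # L)) = [1] @ replicate (length (butlast L)) 2 @ [?d q]"
    using leaf by (subst L_split) simp
  then have "deg_monotone_path V E (q # L)"
    using M q_ge_2 unfolding deg_monotone_path_def by (simp add: sorted_append)
  then show thesis using that by simp
qed

locale max_deg_leaf_edge =
  fixes V :: "'a set" and E :: "'a set set" and x u :: 'a
  assumes tree: "tree V E"
    and x: "x \<in> V" and x_max: "\<forall>v\<in>V. deg V E v \<le> deg V E x" and x_deg: "2 \<le> deg V E x"
    and u: "u \<in> V" and u_leaf: "deg V E u = 1" and u_x: "{u, x} \<notin> E"
begin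

abbreviation E' :: "'a set set" where "E' \<equiv> insert {u, x} E"

lemma u_ne_x: "u \<noteq> x"
  using u_leaf x_deg by auto

lemma deg_E': "deg V E' v = deg V E v + (if v = u \<or> v = x then 1 else 0)"
  using deg_insert_edge[OF treeD(4)[OF tree] u x u_ne_x u_x] .

lemma sorted_path_visits_x_last:
  assumes p: "is_path V E' p" "sorted (map (deg V E') p)" and i: "i < length p" "p ! i = x"
  shows "Suc i = length p"
proof (rule ccontr)
  assume "Suc i \<noteq> length p"
  with i have si: "Suc i < length p" by simp
  then have "deg V E' x \<le> deg V E' (p ! Suc i)"
    using sorted_nth_mono[OF p(2), of i "Suc i"] i by simp
  moreover have "p ! Suc i \<noteq> x" using path_nth_eq_iff[OF p(1), of i "Suc i"] i si by simp
  ultimately show False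
    using deg_E'[of x] deg_E'[of "p ! Suc i"] x_max x_deg u_leaf path_nth_in[OF p(1) si]
    by (auto split: if_splits)
qed

lemma deg_monotone_path_beyond_sorted_leaf_path:
  assumes L: "is_path V E L" "last L = u" "x \<notin> set L" "sorted (map (deg V E') L)"
  obtains q where "deg_monotone_path V E q" "length L < length q"
proof -
  have L_split: "L = butlast L @ [u]" using L unfolding is_path_def by (metis append_butlast_last_id)
  then have "u \<notin> set (butlast L)"
    using L(1) unfolding is_path_def by (metis distinct_append disjoint_iff list.set_intros(1))
  moreover have "x \<notin> set (butlast L)" using L(3) by (auto dest: in_set_butlastD)
  ultimately have same: "map (deg V E) (butlast L) = map (deg V E') (butlast L)"
    by (intro map_cong) (auto simp: deg_E')
  have sorted: "sorted (map (deg V E') (butlast L))" "\<forall>v\<in>set (butlast L). deg V E' v \<le> deg V E' u"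
    using L(4) by (subst (asm) L_split, simp add: sorted_append)+
  have "deg V E (last L) = 1" using L(2) u_leaf by simp
  moreover have "sorted (map (deg V E) (butlast L))" using sorted(1) unfolding same .
  moreover have "\<forall>v\<in>set (butlast L). deg V E v \<le> 2"
    using sorted(2) same deg_E'[of u] u_leaf by (auto simp: map_eq_conv)
  ultimately show thesis
    by (rule deg_monotone_path_beyond_leaf_path[OF tree L(1) _ _ _ x L(3) x_deg]) (rule that)
qed

lemma sorted_path_avoiding_leaf_monotone:
  assumes p: "is_path V E p" "sorted (map (deg V E') p)" and u_notin: "u \<notin> set (tl p)"
  shows "deg_monotone_path V E p"
proof -
  have "deg V E (p ! i) \<le> deg V E (p ! Suc i)" if i: "Suc i < length p" for i
  proof (cases "p ! Suc i = x")
    case True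
    then show ?thesis using x_max path_nth_in[OF p(1), of i] i by simp
  next
    case False
    have "p ! Suc i \<noteq> u" using u_notin i by (auto simp: in_set_conv_nth nth_tl)
    have "deg V E (p ! i) \<le> deg V E' (p ! i)" using deg_E' by simp
    also have "\<dots> \<le> deg V E' (p ! Suc i)" using sorted_nth_mono[OF p(2), of i "Suc i"] i by simp
    also have "\<dots> = deg V E (p ! Suc i)" using deg_E' False \<open>p ! Suc i \<noteq> u\<close> by simp
    finally show ?thesis .
  qed
  then show ?thesis using p(1) unfolding deg_monotone_path_def by (simp add: sorted_iff_nth_Suc)
qed

lemma deg_monotone_path_dominating_sorted_path:
  assumes p: "is_path V E' p" "sorted (map (deg V E') p)"
  obtains q where "deg_monotone_path V E q" "length p \<le> length q"
proof -
  note x_last = sorted_path_visits_x_last[OF p]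
  consider (uses_edge) i where "Suc i < length p" "{p ! i, p ! Suc i} = {u, x}"
    | (avoids_edge) "\<And>i. Suc i < length p \<Longrightarrow> {p ! i, p ! Suc i} \<noteq> {u, x}"
    by blast
  then show thesis
  proof cases
    case uses_edge
    then have edge: "p ! i = u" "Suc (Suc i) = length p"
      using x_last[of i] x_last[of "Suc i"] by (auto simp: doubleton_eq_iff)
    have x_notin: "x \<notin> set (butlast p)"
    proof
      assume "x \<in> set (butlast p)"
      then obtain j where "j < length p - 1" "p ! j = x" by (auto simp: in_set_conv_nth nth_butlast)
      with x_last[of j] show False by linarith
    qed
    have "is_path V E' (butlast p)"
      unfolding butlast_conv_take using path_take[OF p(1)] edge by simp
    then have "is_path V E (butlast p)" using x_notin by (rule path_remove_edge_at_unvisited)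
    moreover have "last (butlast p) = u"
    proof -
      have "Suc i = length (butlast p)" using edge(2) by simp
      then show ?thesis using edge(1) by (simp add: last_eq_nth nth_butlast del: length_butlast)
    qed
    moreover have "sorted (map (deg V E') (butlast p))"
      using p(2) by (simp add: map_butlast sorted_butlast)
    ultimately obtain q where "deg_monotone_path V E q" "length (butlast p) < length q"
      by (rule deg_monotone_path_beyond_sorted_leaf_path[OF _ _ x_notin])
    with that show thesis by simp
  next
    case avoids_edge
    with p(1) have pE: "is_path V E p" by (rule path_remove_unused_edge)
    show thesis
    proof (cases "u \<in> set (tl p)")
      case True
      then obtain k where "k < length (tl p)" "tl p ! k = u" by (auto simp: in_set_conv_nth)
      then have k: "Suc k < length p" "p ! Suc k = u" by (auto simp: nth_tl)
      have "Suc (Suc k) = length p"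
        using path_interior_deg_ge_2[OF treeD(1)[OF tree] pE, of "Suc k"] k u_leaf by fastforce
      then have "last p = u" using k by (simp add: last_eq_nth)
      moreover have "x \<notin> set p"
      proof
        assume "x \<in> set p"
        then obtain j where "j < length p" "p ! j = x" by (auto simp: in_set_conv_nth)
        with x_last[of j] \<open>last p = u\<close> u_ne_x show False by (simp add: last_eq_nth)
      qed
      ultimately obtain q where "deg_monotone_path V E q" "length p < length q"
        using pE p(2) by (elim deg_monotone_path_beyond_sorted_leaf_path)
      with that show thesis by simp
    next
      case False
      with pE p(2) have "deg_monotone_path V E p" by (rule sorted_path_avoiding_leaf_monotone)
      with that show thesis by simp
    qed
  qed
qed

lemma mp_insert_le: "mp V E' \<le> mp V E"
proof -
  have fin: "finite V" and ne: "V \<noteq> {}" using tree by (rule treeD)+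
  obtain p where p: "deg_monotone_path V E' p" "length p = mp V E'"
    using fin ne by (rule mp_attained)
  then have path: "is_path V E' p" "is_path V E' (rev p)"
    unfolding deg_monotone_path_def by (simp_all add: path_rev)
  from p(1) consider "sorted (map (deg V E') p)" | "sorted (map (deg V E') (rev p))"
    unfolding deg_monotone_path_def by (auto simp: rev_map)
  then obtain q where "deg_monotone_path V E q" "length p \<le> length q"
  proof cases
    case 1
    with path(1) show thesis by (rule deg_monotone_path_dominating_sorted_path) (rule that)
  next
    case 2
    with path(2) show thesis by (rule deg_monotone_path_dominating_sorted_path) (simp add: that)
  qed
  then show ?thesis using p(2) length_le_mp[OF fin] by fastforce
qed

end

lemma star_edge_iff:
  assumes "E = {{c, v} |v. v \<in> V - {c}}"
  shows "{a, b} \<in> E \<longleftrightarrow> (a = c \<and> b \<in> V - {c}) \<or> (b = c \<and> a \<in> V - {c})"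
  using assms by (auto simp: doubleton_eq_iff)

lemma star_deg:
  assumes "finite V" "c \<in> V" "E = {{c, v} |v. v \<in> V - {c}}"
  shows "deg V E c = card V - 1" and "v \<in> V - {c} \<Longrightarrow> deg V E v = 1"
proof -
  have "{u \<in> V. {u, c} \<in> E} = V - {c}" using star_edge_iff[OF assms(3)] by auto
  then show "deg V E c = card V - 1" using assms(1,2) unfolding deg_def by simp
  assume "v \<in> V - {c}"
  then have "{u \<in> V. {u, v} \<in> E} = {c}" using star_edge_iff[OF assms(3)] assms(2) by auto
  then show "deg V E v = 1" unfolding deg_def by simp
qed

lemma mp_star_le_2:
  assumes fin: "finite V" and c: "c \<in> V" and star: "E = {{c, v} |v. v \<in> V - {c}}"
    and card: "3 \<le> card V"
  shows "mp V E \<le> 2"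
proof (rule ccontr)
  assume "\<not> mp V E \<le> 2"
  moreover obtain p where p: "deg_monotone_path V E p" "length p = mp V E"
    using fin c by (elim mp_attained) auto
  ultimately have len: "3 \<le> length p" by simp
  have path: "is_path V E p" using p(1) unfolding deg_monotone_path_def by simp
  have edges: "{p ! 0, p ! 1} \<in> E" "{p ! 1, p ! 2} \<in> E"
    using path_edge[OF path, of 0] path_edge[OF path, of 1] len by (simp_all add: numeral_2_eq_2)
  have "p \<noteq> []" using len by (cases p) auto
  then have "p ! 0 \<noteq> p ! 2" using path_nth_eq_iff[OF path, of 0 2] len by simp
  then have "p ! 1 = c" "p ! 0 \<in> V - {c}" "p ! 2 \<in> V - {c}"
    using edges unfolding star_edge_iff[OF star] by auto
  then have "deg V E (p ! 1) = card V - 1" "deg V E (p ! 0) = 1" "deg V E (p ! 2) = 1"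
    using star_deg[OF fin c star] by simp_all
  with card deg_monotone_path_no_peak[OF p(1), of 0] len show False
    by (simp add: numeral_2_eq_2)
qed

lemma star_saturated:
  assumes fin: "finite V" and c: "c \<in> V" and star: "E = {{c, v} |v. v \<in> V - {c}}"
    and card: "3 \<le> card V"
  shows "saturated V E"
  unfolding saturated_def
proof (intro ballI impI)
  fix a b assume a: "a \<in> V" and b: "b \<in> V" and ab: "a \<noteq> b \<and> {a, b} \<notin> E"
  let ?E' = "insert {a, b} E"
  have "a \<noteq> c" "b \<noteq> c" using a b ab unfolding star_edge_iff[OF star] by auto
  then have "deg V ?E' a = 2" "deg V ?E' b = 2" "deg V ?E' c = card V - 1"
    using deg_insert_edge[OF fin a b] ab star_deg[OF fin c star] a b by auto
  moreover have "is_path V ?E' [a, b, c]"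
    using a b c ab \<open>a \<noteq> c\<close> \<open>b \<noteq> c\<close> star_edge_iff[OF star, of b c]
    unfolding is_path_def by (auto simp: less_Suc_eq nth_Cons')
  ultimately have "deg_monotone_path V ?E' [a, b, c]"
    unfolding deg_monotone_path_def using card by auto
  then have "3 \<le> mp V ?E'" using length_le_mp[OF fin] by fastforce
  then show "mp V E < mp V ?E'" using mp_star_le_2[OF assms] by simp
qed

theorem corollary2p3:
  fixes V :: "'a set" and E :: "'a set set"
  assumes "tree V E" and "card V \<ge> 3"
  shows "saturated V E \<longleftrightarrow> is_star V E"
proof
  assume saturated: "saturated V E"
  show "is_star V E"
  proof (rule ccontr)
    assume not_star: "\<not> is_star V E"
    have fin: "finite V" and ne: "V \<noteq> {}" using assms(1) by (rule treeD)+
    then have "Max (deg V E ` V) \<in> deg V E ` V" by simp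
    then obtain x where "x \<in> V" "deg V E x = Max (deg V E ` V)" by (auto simp: image_iff)
    then have x: "x \<in> V" "\<forall>v\<in>V. deg V E v \<le> deg V E x" using fin by simp_all
    obtain u where u: "u \<in> V" "deg V E u = 1" "{u, x} \<notin> E" and x2: "2 \<le> deg V E x"
      using nonadjacent_leaf_if_not_star[OF assms(1) not_star x] .
    then have "u \<noteq> x" by auto
    with saturated u(1,3) x(1) have "mp V E < mp V (insert {u, x} E)"
      unfolding saturated_def by blast
    moreover have "max_deg_leaf_edge V E x u"
      unfolding max_deg_leaf_edge_def using assms(1) x x2 u by simp
    then have "mp V (insert {u, x} E) \<le> mp V E" by (rule max_deg_leaf_edge.mp_insert_le)
    ultimately show False by simp
  qed
next
  assume "is_star V E"
  then obtain c where "c \<in> V" "E = {{c, v} |v. v \<in> V - {c}}" unfolding is_star_def by blast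
  then show "saturated V E" using star_saturated[OF treeD(4)[OF assms(1)]] assms(2) by blast
qed

end
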